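(* Let $f:\mathbb{R}^n\to\mathbb{R}^n$ be continuous and let $\mu\ge0$. Suppose that for every $x\in\mathbb{R}^n$, $f$ admits a strict $\mu$-estimator $h_x$ at $x$ which is strongly regular around $x$, and that $$\sigma_f:=\inf_{x\in\mathbb{R}^n}\operatorname{lop}(h_x,x)>\mu.$$ Then $f$ is a bijection of $\mathbb{R}^n$ onto $\mathbb{R}^n$ and $f^{-1}$ is Lipschitz continuous on $\mathbb{R}^n$ with constant $(\sigma_f-\mu)^{-1}$.
   Context: $B^\circ(x,r)$ denotes the open ball. $\operatorname{lip}(g,\bar x)$ is the infimum of all $\ell>0$ such that $\|g(x_1)-g(x_2)\|\le\ell\|x_1-x_2\|$ on some neighbourhood of $\bar x$ ($+\infty$ if none). Given $\mu\ge0$, $h$ is a strict $\mu$-estimator of $f$ at $\bar x$ if $h(\bar x)=f(\bar x)$ and $\operatorname{lip}(f-h,\bar x)\le\mu$. $h$ is linearly open around $\bar x$ if there exist $\alpha>0$ and neighbourhoods $U$ of $\bar x$, $V$ of $h(\bar x)$ with $B^\circ(h(x),\alpha r)\cap V\subseteq h(B^\circ(x,r))$ for all $x\in U$, $r>0$; $\operatorname{lop}(h,\bar x)$ is the supremum of such $\alpha$ ($0$ if none). $h$ is strongly regular around $\bar x$ if it is linearly open around $\bar x$ and there exist neighbourhoods $U$ of $\bar x$ and $V$ of $h(\bar x)$ such that $h^{-1}(y)\cap U$ is a singleton for every $y\in V$. *)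

theory Defs
  imports "HOL-Analysis.Analysis"
begin

definition lip :: "('a::real_normed_vector \<Rightarrow> 'b::real_normed_vector) \<Rightarrow> 'a \<Rightarrow> ereal" where
  "lip g xbar = Inf (ereal ` {l. l > 0 \<and> (\<exists>U. open U \<and> xbar \<in> U \<and>
       (\<forall>x1\<in>U. \<forall>x2\<in>U. norm (g x1 - g x2) \<le> l * norm (x1 - x2)))})"

definition strict_estimator ::
  "real \<Rightarrow> ('a::real_normed_vector \<Rightarrow> 'b::real_normed_vector) \<Rightarrow> ('a \<Rightarrow> 'b) \<Rightarrow> 'a \<Rightarrow> bool" where
  "strict_estimator \<mu> h f xbar \<longleftrightarrow> h xbar = f xbar \<and> lip (\<lambda>x. f x - h x) xbar \<le> ereal \<mu>"

definition linearly_open_with ::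
  "('a::metric_space \<Rightarrow> 'b::metric_space) \<Rightarrow> 'a \<Rightarrow> real \<Rightarrow> bool" where
  "linearly_open_with h xbar \<alpha> \<longleftrightarrow> \<alpha> > 0 \<and> (\<exists>U V. open U \<and> xbar \<in> U \<and> open V \<and> h xbar \<in> V \<and>
       (\<forall>x\<in>U. \<forall>r>0. ball (h x) (\<alpha> * r) \<inter> V \<subseteq> h ` ball x r))"

definition linearly_open :: "('a::metric_space \<Rightarrow> 'b::metric_space) \<Rightarrow> 'a \<Rightarrow> bool" where
  "linearly_open h xbar \<longleftrightarrow> (\<exists>\<alpha>. linearly_open_with h xbar \<alpha>)"

definition lop :: "('a::metric_space \<Rightarrow> 'b::metric_space) \<Rightarrow> 'a \<Rightarrow> ereal" where
  "lop h xbar = Sup (insert 0 (ereal ` {\<alpha>. linearly_open_with h xbar \<alpha>}))"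

definition strongly_regular :: "('a::metric_space \<Rightarrow> 'b::metric_space) \<Rightarrow> 'a \<Rightarrow> bool" where
  "strongly_regular h xbar \<longleftrightarrow> linearly_open h xbar \<and>
     (\<exists>U V. open U \<and> xbar \<in> U \<and> open V \<and> h xbar \<in> V \<and>
        (\<forall>y\<in>V. \<exists>x. h -` {y} \<inter> U = {x}))"

end

(*
  Fix c with c + \<mu> < \<sigma>_f.  Near each x the estimator h_x is linearly open with
  modulus \<alpha> > c + \<mu>, and f - h_x is Lipschitz with a constant l < \<alpha> - c.  Two local
  consequences follow: the local single-valued inverse of h_x makes f locally
  c-expanding, and linear openness of h_x lets every x with f x \<noteq> w be moved to a
  point z with |f z - w| + c d(z, x) < |f x - w|.  Minimising |f z - w| + c d(z, x) over a
  large ball therefore yields, for all x and w, a preimage z of w with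
  c d(z, x) \<le> |f x - w|.

  Injectivity is a discrete homotopy lifting argument: if f a = f b = w, lift the
  straight segments from f p to w, for p running through a fine grid on [a, b], by
  repeatedly choosing such nearby preimages.  By uniform local expansion, lifts from
  neighbouring grid points end at the same preimage of w, while the lifts from a and
  from b never move; hence a = b.  The preimage estimate then says that inv f is
  (1/c)-Lipschitz for every c < \<sigma>_f - \<mu>, and \<sigma>_f = \<infinity> is impossible because inv f
  would be constant.
*)

theory Submission
  imports Defs
begin

lemma strict_estimator_lipschitz_near:
  fixes h f :: "'a::real_normed_vector \<Rightarrow> 'b::real_normed_vector"
  assumes "strict_estimator \<mu> h f x" and "\<mu> < l"
  obtains U where "open U" "x \<in> U" "l-lipschitz_on U (\<lambda>x. f x - h x)"
proof -
  have "lip (\<lambda>x. f x - h x) x < ereal l"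
    using assms unfolding strict_estimator_def by (meson ereal_less_ereal_Ex le_less_trans less_ereal.simps(1))
  then obtain l' U where l': "0 < l'" "l' < l" "open U" "x \<in> U"
    and bound: "\<forall>x1\<in>U. \<forall>x2\<in>U. norm ((f x1 - h x1) - (f x2 - h x2)) \<le> l' * norm (x1 - x2)"
    unfolding lip_def Inf_less_iff by auto
  have "l-lipschitz_on U (\<lambda>x. f x - h x)"
  proof (rule lipschitz_onI)
    fix x1 x2 assume "x1 \<in> U" "x2 \<in> U"
    then have "norm ((f x1 - h x1) - (f x2 - h x2)) \<le> l' * norm (x1 - x2)" using bound by blast
    also have "\<dots> \<le> l * norm (x1 - x2)" using l' by (simp add: mult_right_mono)
    finally show "dist (f x1 - h x1) (f x2 - h x2) \<le> l * dist x1 x2" by (simp add: dist_norm)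
  qed (use l' in simp)
  with l' show ?thesis using that by blast
qed

lemma linearly_open_with_above:
  assumes "ereal a < lop h x" and "0 \<le> a"
  obtains \<alpha> where "linearly_open_with h x \<alpha>" and "a < \<alpha>"
proof -
  obtain y where y: "y \<in> insert 0 (ereal ` {\<alpha>. linearly_open_with h x \<alpha>})" "ereal a < y"
    using assms(1) unfolding lop_def less_Sup_iff by blast
  moreover have "y \<noteq> 0" using y(2) assms(2) by (auto simp: zero_ereal_def)
  ultimately show ?thesis using that by auto
qed

lemma linearly_open_withE:
  assumes "linearly_open_with h x \<alpha>"
  obtains U V where "open U" "x \<in> U" "open V" "h x \<in> V"
    "\<And>u r. u \<in> U \<Longrightarrow> r > 0 \<Longrightarrow> ball (h u) (\<alpha> * r) \<inter> V \<subseteq> h ` ball u r"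
proof -
  obtain U V where "open U" "x \<in> U" "open V" "h x \<in> V"
    "\<forall>u\<in>U. \<forall>r>0. ball (h u) (\<alpha> * r) \<inter> V \<subseteq> h ` ball u r"
    using assms unfolding linearly_open_with_def by blast
  then show ?thesis using that by simp
qed

lemma estimator_descent:
  fixes f h :: "'a::metric_space \<Rightarrow> 'b::real_normed_vector"
  assumes hx: "h x = f x" and U: "open U" "x \<in> U" "l-lipschitz_on U (\<lambda>x. f x - h x)"
    and lo: "linearly_open_with h x \<alpha>" and c: "0 < c" "c + l < \<alpha>" and fw: "f x \<noteq> w"
  obtains z where "dist (f z) w + c * dist z x < dist (f x) w"
proof -
  obtain U1 V1 where U1: "open U1" "x \<in> U1" "open V1" "h x \<in> V1"
    and covers: "\<And>u r. u \<in> U1 \<Longrightarrow> r > 0 \<Longrightarrow> ball (h u) (\<alpha> * r) \<inter> V1 \<subseteq> h ` ball u r"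
    by (rule linearly_open_withE[OF lo]) (rule that)
  define d where "d = dist (f x) w"
  define a where "a = (c + l + \<alpha>) / 2"
  have d: "d > 0" using fw unfolding d_def by simp
  have a: "c + l < a" "a < \<alpha>" "0 < a" using c lipschitz_on_nonneg[OF U(3)] unfolding a_def by auto
  obtain r0 where r0: "r0 > 0" "ball x r0 \<subseteq> U" using U openE by blast
  obtain e where e: "e > 0" "ball (h x) e \<subseteq> V1" using U1 openE by blast
  define r where "r = min r0 (min (e / a) (d / a)) / 2"
  have r: "r > 0" "r < r0" "a * r < e" "a * r < d"
    using r0 e d a unfolding r_def by (auto simp: field_simps min_def)
  \<comment> \<open>Move the value of \<open>h\<close> a distance \<open>a r\<close> straight towards \<open>w\<close>.\<close>
  define t where "t = f x + (a * r / d) *\<^sub>R (w - f x)"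
  have "dist (h x) t = a * r"
    using d a r unfolding t_def hx d_def by (simp add: dist_norm norm_minus_commute)
  then have "t \<in> ball (h x) (\<alpha> * r) \<inter> V1"
    using a r e by (auto simp: mult_strict_right_mono)
  then obtain z where z: "dist x z < r" "h z = t" using covers[OF U1(2) r(1)] by auto
  have "f z - w = (1 - a * r / d) *\<^sub>R (f x - w) + ((f z - h z) - (f x - h x))"
    using d unfolding z(2) t_def hx by (simp add: algebra_simps)
  then have "dist (f z) w \<le> norm ((1 - a * r / d) *\<^sub>R (f x - w)) + dist (f z - h z) (f x - h x)"
    by (metis dist_norm norm_triangle_ineq)
  also have "norm ((1 - a * r / d) *\<^sub>R (f x - w)) = (1 - a * r / d) * d"
    using d r by (simp add: d_def dist_norm)
  also have "\<dots> = d - a * r"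
    using d by (simp add: field_simps)
  also have "dist (f z - h z) (f x - h x) \<le> l * dist z x"
  proof -
    have "z \<in> U" using z(1) r r0 by auto
    then show ?thesis using lipschitz_onD[OF U(3) _ U(2)] by blast
  qed
  finally have "dist (f z) w \<le> d - a * r + l * dist z x" by simp
  moreover have "(l + c) * dist z x < a * r"
  proof -
    have "(l + c) * dist z x \<le> (l + c) * r"
      using z(1) c lipschitz_on_nonneg[OF U(3)] by (intro mult_left_mono) (auto simp: dist_commute)
    also have "\<dots> < a * r" using a r by (intro mult_strict_right_mono) auto
    finally show ?thesis .
  qed
  ultimately have "dist (f z) w + c * dist z x < d" by (simp add: algebra_simps)
  then show ?thesis using that unfolding d_def by blast
qed

lemma strongly_regular_local_expansion:
  fixes h :: "'a::metric_space \<Rightarrow> 'b::metric_space"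
  assumes lo: "linearly_open_with h x \<alpha>" and sr: "strongly_regular h x" and cont: "isCont h x"
  obtains \<rho> where "\<rho> > 0" "\<And>y z. y \<in> ball x \<rho> \<Longrightarrow> z \<in> ball x \<rho> \<Longrightarrow> \<alpha> * dist y z \<le> dist (h y) (h z)"
proof -
  obtain U1 V1 where U1: "open U1" "x \<in> U1" "open V1" "h x \<in> V1"
    and covers: "\<And>u r. u \<in> U1 \<Longrightarrow> r > 0 \<Longrightarrow> ball (h u) (\<alpha> * r) \<inter> V1 \<subseteq> h ` ball u r"
    by (rule linearly_open_withE[OF lo]) (rule that)
  obtain U2 V2 where U2: "open U2" "x \<in> U2" "open V2" "h x \<in> V2"
    and single: "\<forall>y\<in>V2. \<exists>z. h -` {y} \<inter> U2 = {z}"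
    using sr unfolding strongly_regular_def by (elim conjE exE) (rule that)
  obtain r0 where r0: "r0 > 0" "ball x r0 \<subseteq> U1 \<inter> U2"
    using openE[OF open_Int[OF U1(1) U2(1)], of x] U1(2) U2(2) by blast
  obtain e where e: "e > 0" "ball (h x) e \<subseteq> V1 \<inter> V2"
    using openE[OF open_Int[OF U1(3) U2(3)], of "h x"] U1(4) U2(4) by blast
  then obtain \<eta> where "\<eta> > 0" "h ` ball x \<eta> \<subseteq> ball (h x) e"
    using cont unfolding continuous_at_ball by blast
  with e have \<eta>: "\<eta> > 0" "h ` ball x \<eta> \<subseteq> V1 \<inter> V2" by auto
  define \<rho> where "\<rho> = min (r0 / 3) \<eta>"
  have \<rho>: "\<rho> > 0" "3 * \<rho> \<le> r0" "\<rho> \<le> \<eta>" using r0 \<eta> unfolding \<rho>_def by auto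
  have "\<alpha> * dist y z \<le> dist (h y) (h z)" if y: "y \<in> ball x \<rho>" and z: "z \<in> ball x \<rho>" for y z
  proof (rule ccontr)
    assume "\<not> ?thesis"
    then have lt: "dist (h y) (h z) < \<alpha> * dist y z" by simp
    then have r: "dist y z > 0" by (metis dist_eq_0_iff less_irrefl mult_zero_right zero_less_dist_iff)
    have yU1: "y \<in> U1" and zU2: "z \<in> U2" and hz: "h z \<in> V1 \<inter> V2"
      using y z \<rho> r0 \<eta> by auto
    then have "h z \<in> ball (h y) (\<alpha> * dist y z) \<inter> V1" using lt by simp
    then obtain z' where z': "dist y z' < dist y z" "h z' = h z" using covers[OF yU1 r] by auto
    \<comment> \<open>Both \<open>z\<close> and \<open>z'\<close> lie in \<open>U2\<close>, where \<open>h z\<close> has a single preimage.\<close>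
    have "dist x z' < r0"
      using y z z' \<rho> dist_triangle[of x z' y] dist_triangle[of y z x] by (simp add: dist_commute)
    then have "z' \<in> U2" using r0 by auto
    then have "z' \<in> h -` {h z} \<inter> U2" "z \<in> h -` {h z} \<inter> U2" using zU2 z'(2) by auto
    moreover obtain z0 where "h -` {h z} \<inter> U2 = {z0}" using single hz by blast
    ultimately have "z' = z" by auto
    then show False using z'(1) by simp
  qed
  with \<rho>(1) show ?thesis by (rule that)
qed

lemma estimator_local_expansion:
  fixes f h :: "'a::metric_space \<Rightarrow> 'b::real_normed_vector"
  assumes f: "isCont f x" and U: "open U" "x \<in> U" "l-lipschitz_on U (\<lambda>x. f x - h x)"
    and lo: "linearly_open_with h x \<alpha>" and sr: "strongly_regular h x" and c: "c + l \<le> \<alpha>"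
  obtains \<rho> where "\<rho> > 0" "\<forall>y\<in>ball x \<rho>. \<forall>z\<in>ball x \<rho>. c * dist y z \<le> dist (f y) (f z)"
proof -
  have "isCont (\<lambda>x. f x - h x) x"
    using lipschitz_on_continuous_on[OF U(3)] U(1,2) continuous_on_eq_continuous_at by blast
  then have "isCont h x" using continuous_diff[OF f] by fastforce
  then obtain \<rho>1 where \<rho>1: "\<rho>1 > 0"
    and h_exp: "\<And>y z. y \<in> ball x \<rho>1 \<Longrightarrow> z \<in> ball x \<rho>1 \<Longrightarrow> \<alpha> * dist y z \<le> dist (h y) (h z)"
    using strongly_regular_local_expansion[OF lo sr] by blast
  obtain \<rho>2 where \<rho>2: "\<rho>2 > 0" "ball x \<rho>2 \<subseteq> U" using U openE by blast
  define \<rho> where "\<rho> = min \<rho>1 \<rho>2"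
  have "c * dist y z \<le> dist (f y) (f z)" if "y \<in> ball x \<rho>" "z \<in> ball x \<rho>" for y z
  proof -
    have "y \<in> U" "z \<in> U" using that \<rho>2 unfolding \<rho>_def by auto
    then have "dist (f y - h y) (f z - h z) \<le> l * dist y z" by (rule lipschitz_onD[OF U(3)])
    moreover have "dist (h y) (h z) \<le> dist (f y) (f z) + dist (f y - h y) (f z - h z)"
      using norm_triangle_ineq4[of "f y - f z" "(f y - h y) - (f z - h z)"] by (simp add: dist_norm)
    moreover have "\<alpha> * dist y z \<le> dist (h y) (h z)" using that h_exp unfolding \<rho>_def by auto
    moreover have "c * dist y z \<le> (\<alpha> - l) * dist y z" using c by (simp add: mult_right_mono)
    ultimately show ?thesis by (simp add: algebra_simps)
  qed
  moreover have "\<rho> > 0" using \<rho>1 \<rho>2 unfolding \<rho>_def by simp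
  ultimately show ?thesis using that by blast
qed

definition linearly_surjective :: "('a::metric_space \<Rightarrow> 'b::metric_space) \<Rightarrow> real \<Rightarrow> bool" where
  "linearly_surjective f c \<longleftrightarrow> (\<forall>x y. \<exists>z. f z = y \<and> c * dist z x \<le> dist (f x) y)"

definition locally_expanding :: "('a::metric_space \<Rightarrow> 'b::metric_space) \<Rightarrow> real \<Rightarrow> bool" where
  "locally_expanding f c \<longleftrightarrow>
     (\<forall>x. \<exists>\<rho>>0. \<forall>y\<in>ball x \<rho>. \<forall>z\<in>ball x \<rho>. c * dist y z \<le> dist (f y) (f z))"

lemma descent_imp_linearly_surjective:
  fixes f :: "'a::heine_borel \<Rightarrow> 'b::metric_space"
  assumes cont: "continuous_on UNIV f" and c: "c > 0"
    and descent: "\<And>x w. f x \<noteq> w \<Longrightarrow> \<exists>z. dist (f z) w + c * dist z x < dist (f x) w"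
  shows "linearly_surjective f c"
  unfolding linearly_surjective_def
proof (intro allI)
  fix x0 w
  define \<psi> where "\<psi> z = dist (f z) w + c * dist z x0" for z
  define S where "S = cball x0 (dist (f x0) w / c)"
  have x0S: "x0 \<in> S" using c unfolding S_def by simp
  have "continuous_on S \<psi>"
    unfolding \<psi>_def by (intro continuous_intros continuous_on_subset[OF cont]) auto
  then obtain z where zS: "z \<in> S" and zmin: "\<And>y. y \<in> S \<Longrightarrow> \<psi> z \<le> \<psi> y"
    using continuous_attains_inf[of S \<psi>] x0S unfolding S_def by auto
  \<comment> \<open>Outside \<open>S\<close> already the term \<open>c * dist y x0\<close> exceeds \<open>\<psi> x0\<close>, so \<open>z\<close> minimises \<open>\<psi>\<close> globally.\<close>
  have glob: "\<psi> z \<le> \<psi> y" for y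
  proof (cases "y \<in> S")
    case False
    then have "\<psi> x0 < c * dist y x0" using c by (simp add: S_def \<psi>_def field_simps dist_commute)
    also have "\<dots> \<le> \<psi> y" unfolding \<psi>_def by simp
    finally show ?thesis using zmin[OF x0S] by simp
  qed (rule zmin)
  have "f z = w"
  proof (rule ccontr)
    assume "f z \<noteq> w"
    then obtain z' where z': "dist (f z') w + c * dist z' z < dist (f z) w" using descent by blast
    have "\<psi> z' \<le> dist (f z') w + c * dist z' z + c * dist z x0"
      using c dist_triangle[of z' x0 z] unfolding \<psi>_def by (simp add: distrib_left[symmetric])
    also have "\<dots> < \<psi> z" using z' unfolding \<psi>_def by simp
    finally show False using glob[of z'] by simp
  qed
  moreover have "c * dist z x0 \<le> dist (f x0) w"
    using glob[of x0] \<open>f z = w\<close> unfolding \<psi>_def by simp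
  ultimately show "\<exists>z. f z = w \<and> c * dist z x0 \<le> dist (f x0) w" by blast
qed

lemma locally_expanding_uniformly_near_compact:
  assumes "locally_expanding f c" and "compact K"
  obtains \<delta> where "\<delta> > 0"
    "\<And>y z. y \<in> K \<Longrightarrow> dist y z < \<delta> \<Longrightarrow> c * dist y z \<le> dist (f y) (f z)"
proof -
  obtain \<rho> where \<rho>: "\<And>x. \<rho> x > 0"
    "\<And>x y z. y \<in> ball x (\<rho> x) \<Longrightarrow> z \<in> ball x (\<rho> x) \<Longrightarrow> c * dist y z \<le> dist (f y) (f z)"
    using assms(1) unfolding locally_expanding_def by metis
  have "K \<subseteq> \<Union> (range (\<lambda>x. ball x (\<rho> x)))" using \<rho>(1) by (meson UNIV_I UN_I centre_in_ball subsetI)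
  then obtain \<delta> where \<delta>: "\<delta> > 0" "\<And>y. y \<in> K \<Longrightarrow> \<exists>G \<in> range (\<lambda>x. ball x (\<rho> x)). ball y \<delta> \<subseteq> G"
    by (rule Heine_Borel_lemma[OF assms(2)]) auto
  have "c * dist y z \<le> dist (f y) (f z)" if y: "y \<in> K" and yz: "dist y z < \<delta>" for y z
  proof -
    obtain x where x: "ball y \<delta> \<subseteq> ball x (\<rho> x)" using \<delta>(2)[OF y] by auto
    moreover have "y \<in> ball y \<delta>" "z \<in> ball y \<delta>" using \<delta>(1) yz by auto
    ultimately have "y \<in> ball x (\<rho> x)" "z \<in> ball x (\<rho> x)" by blast+
    then show ?thesis by (rule \<rho>(2))
  qed
  with \<delta>(1) show ?thesis by (rule that)
qed

primrec lift_chain :: "('a \<Rightarrow> 'b \<Rightarrow> 'a) \<Rightarrow> 'a \<Rightarrow> (nat \<Rightarrow> 'b) \<Rightarrow> nat \<Rightarrow> 'a" where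
  "lift_chain J x v 0 = x"
| "lift_chain J x v (Suc k) = J (lift_chain J x v k) (v (Suc k))"

definition segment_point :: "'b \<Rightarrow> 'b \<Rightarrow> nat \<Rightarrow> nat \<Rightarrow> 'b::real_normed_vector" where
  "segment_point y w N k = w + ((real N - real k) / real N) *\<^sub>R (y - w)"

lemma lift_chain_segment:
  fixes f :: "'a::metric_space \<Rightarrow> 'b::real_normed_vector" and x :: 'a and w :: 'b
  assumes J: "\<And>x y. f (J x y) = y \<and> c * dist (J x y) x \<le> dist (f x) y"
    and c: "c \<ge> 0" and N: "N > 0"
  defines "Z \<equiv> lift_chain J x (segment_point (f x) w N)"
  shows "f (Z k) = segment_point (f x) w N k"
    and "c * dist (Z (Suc k)) (Z k) \<le> dist (f x) w / real N"
    and "c * dist (Z k) x \<le> real k * dist (f x) w / real N"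
proof -
  show hits: "f (Z k) = segment_point (f x) w N k" for k
    using J N by (cases k) (simp_all add: Z_def segment_point_def)
  show step: "c * dist (Z (Suc k)) (Z k) \<le> dist (f x) w / real N" for k
  proof -
    have "segment_point (f x) w N k - segment_point (f x) w N (Suc k)
        = ((real N - real k) / real N - (real N - real (Suc k)) / real N) *\<^sub>R (f x - w)"
      unfolding segment_point_def by (simp add: scaleR_diff_left)
    also have "\<dots> = (1 / real N) *\<^sub>R (f x - w)"
      by (simp add: diff_divide_distrib[symmetric])
    finally have "dist (f (Z k)) (segment_point (f x) w N (Suc k)) = dist (f x) w / real N"
      by (simp add: hits dist_norm)
    moreover have "c * dist (Z (Suc k)) (Z k) \<le> dist (f (Z k)) (segment_point (f x) w N (Suc k))"
      using J unfolding Z_def by simp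
    ultimately show ?thesis by simp
  qed
  show "c * dist (Z k) x \<le> real k * dist (f x) w / real N"
  proof (induction k)
    case (Suc k)
    have "c * dist (Z (Suc k)) x \<le> c * dist (Z (Suc k)) (Z k) + c * dist (Z k) x"
      using mult_left_mono[OF dist_triangle[of "Z (Suc k)" x "Z k"] c]
      by (simp add: distrib_left)
    also have "\<dots> \<le> real (Suc k) * dist (f x) w / real N"
      using step[of k] Suc.IH by (simp add: add_divide_distrib distrib_right)
    finally show ?case .
  qed (simp add: Z_def)
qed

lemma expanding_chains_stay_close:
  fixes Z Z' :: "nat \<Rightarrow> 'a::metric_space" and f :: "'a \<Rightarrow> 'b::metric_space"
  assumes expand: "\<And>y z. y \<in> K \<Longrightarrow> dist y z < \<delta> \<Longrightarrow> c * dist y z \<le> dist (f y) (f z)"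
    and c: "c > 0" and inK: "\<And>k. k \<le> N \<Longrightarrow> Z k \<in> K"
    and steps: "\<And>k. k < N \<Longrightarrow> dist (Z (Suc k)) (Z k) \<le> \<delta> / 8"
      "\<And>k. k < N \<Longrightarrow> dist (Z' (Suc k)) (Z' k) \<le> \<delta> / 8"
    and start: "dist (Z 0) (Z' 0) < \<delta> / 4"
    and targets: "\<And>k. k < N \<Longrightarrow> dist (f (Z (Suc k))) (f (Z' (Suc k))) < c * \<delta> / 4"
  shows "dist (Z N) (Z' N) < \<delta> / 4"
proof -
  have "dist (Z k) (Z' k) < \<delta> / 4" if "k \<le> N" for k
    using that
  proof (induction k)
    case (Suc k)
    \<comment> \<open>The chains are still \<open>\<delta>\<close>-close after one more step, so expansion applies to them.\<close>
    have "dist (Z (Suc k)) (Z' (Suc k)) \<le> dist (Z (Suc k)) (Z k) + dist (Z k) (Z' k) + dist (Z' (Suc k)) (Z' k)"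
      using dist_triangle[of "Z (Suc k)" "Z' (Suc k)" "Z k"] dist_triangle[of "Z k" "Z' (Suc k)" "Z' k"]
      by (simp add: dist_commute)
    also have "\<dots> < \<delta>"
    proof -
      have k: "k < N" using Suc.prems by simp
      show ?thesis
        using steps(1)[OF k] steps(2)[OF k] Suc.IH[OF less_imp_le[OF k]] zero_le_dist[of "Z k" "Z' k"]
        by linarith
    qed
    finally have "c * dist (Z (Suc k)) (Z' (Suc k)) < c * \<delta> / 4"
      using expand[OF inK[OF Suc.prems]] targets[of k] Suc.prems by fastforce
    then show ?case using c by simp
  qed (use start in simp)
  then show ?thesis by simp
qed

lemma lift_chain_segments_meet:
  fixes f :: "'a::metric_space \<Rightarrow> 'b::real_normed_vector"
  assumes J: "\<And>x y. f (J x y) = y \<and> c * dist (J x y) x \<le> dist (f x) y"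
    and c: "c > 0" and N: "N > 0"
    and expand: "\<And>y z. y \<in> K \<Longrightarrow> dist y z < \<delta> \<Longrightarrow> c * dist y z \<le> dist (f y) (f z)"
    and K: "cball x (dist (f x) w / c) \<subseteq> K"
    and close: "dist x x' < \<delta> / 4" "dist (f x) (f x') < c * \<delta> / 4"
    and short: "dist (f x) w \<le> real N * c * \<delta> / 8" "dist (f x') w \<le> real N * c * \<delta> / 8"
  shows "lift_chain J x (segment_point (f x) w N) N = lift_chain J x' (segment_point (f x') w N) N"
proof -
  define Z Z' where "Z = lift_chain J x (segment_point (f x) w N)"
    and "Z' = lift_chain J x' (segment_point (f x') w N)"
  note chain = lift_chain_segment[OF J less_imp_le[OF c] N, where x = x and w = w, folded Z_def]
  note chain' = lift_chain_segment[OF J less_imp_le[OF c] N, where x = x' and w = w, folded Z'_def]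
  have inK: "Z k \<in> K" if "k \<le> N" for k
  proof -
    have "real k * dist (f x) w / real N \<le> dist (f x) w"
      using that N by (simp add: field_simps mult_right_mono)
    then have "c * dist (Z k) x \<le> dist (f x) w" using chain(3)[of k] by linarith
    then show ?thesis using K c by (auto simp: dist_commute field_simps)
  qed
  have step_bound: "dist (f y) w / real N \<le> c * (\<delta> / 8)" if "dist (f y) w \<le> real N * c * \<delta> / 8" for y
    using that N by (simp add: field_simps)
  have "dist (Z N) (Z' N) < \<delta> / 4"
  proof (rule expanding_chains_stay_close[OF expand c inK])
    show "dist (Z (Suc k)) (Z k) \<le> \<delta> / 8" "dist (Z' (Suc k)) (Z' k) \<le> \<delta> / 8" for k
      using chain(2)[of k] chain'(2)[of k] step_bound[OF short(1)] step_bound[OF short(2)] c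
      by (meson mult_le_cancel_left_pos order_trans)+
    show "dist (Z 0) (Z' 0) < \<delta> / 4" using close(1) by (simp add: Z_def Z'_def)
    show "dist (f (Z (Suc k))) (f (Z' (Suc k))) < c * \<delta> / 4" if "k < N" for k
    proof -
      define q where "q = (real N - real (Suc k)) / real N"
      have "segment_point (f x) w N (Suc k) - segment_point (f x') w N (Suc k) = q *\<^sub>R (f x - f x')"
        unfolding segment_point_def q_def by (simp add: algebra_simps)
      then have "dist (segment_point (f x) w N (Suc k)) (segment_point (f x') w N (Suc k))
          = \<bar>q\<bar> * dist (f x) (f x')"
        by (simp add: dist_norm)
      also have "\<dots> \<le> dist (f x) (f x')"
        using that unfolding q_def by (intro mult_left_le_one_le) auto
      finally have "dist (segment_point (f x) w N (Suc k)) (segment_point (f x') w N (Suc k))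
          \<le> dist (f x) (f x')" .
      then show ?thesis using chain(1) chain'(1) close(2) by simp
    qed
  qed simp
  then have "dist (Z N) (Z' N) < \<delta>" using zero_le_dist[of "Z N" "Z' N"] by linarith
  then have "c * dist (Z N) (Z' N) \<le> dist (f (Z N)) (f (Z' N))" by (rule expand[OF inK[OF order_refl]])
  moreover have "f (Z N) = w" "f (Z' N) = w" using chain(1) chain'(1) by (simp_all add: segment_point_def)
  ultimately have "c * dist (Z N) (Z' N) \<le> 0" by simp
  then show ?thesis using c unfolding Z_def Z'_def by (simp add: mult_le_0_iff)
qed

lemma continuous_on_unit_interval_grid:
  fixes g :: "real \<Rightarrow> 'a::metric_space"
  assumes "continuous_on {0..1} g" and "\<epsilon> > 0"
  obtains N0 :: nat where
    "\<And>N i. N0 \<le> N \<Longrightarrow> i < N \<Longrightarrow> dist (g (real i / real N)) (g (real (Suc i) / real N)) < \<epsilon>"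
proof -
  obtain d where d: "d > 0"
    "\<And>t t'. t \<in> {0..1} \<Longrightarrow> t' \<in> {0..1} \<Longrightarrow> dist t' t < d \<Longrightarrow> dist (g t') (g t) < \<epsilon>"
    using compact_uniformly_continuous[OF assms(1) compact_Icc] assms(2)
    unfolding uniformly_continuous_on_def by metis
  obtain N0 :: nat where N0: "N0 > 0" "inverse (real N0) < d" using ex_inverse_of_nat_less[OF d(1)] by blast
  show thesis
  proof (rule that)
    fix N i :: nat assume N: "N0 \<le> N" "i < N"
    have "1 / real N \<le> inverse (real N0)" using N N0(1) by (simp add: divide_inverse le_imp_inverse_le)
    then have "dist (real i / real N) (real (Suc i) / real N) < d"
      using N0(2) by (simp add: dist_real_def add_divide_distrib)
    moreover have "real i / real N \<in> {0..1}" "real (Suc i) / real N \<in> {0..1}" using N by auto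
    ultimately show "dist (g (real i / real N)) (g (real (Suc i) / real N)) < \<epsilon>" using d(2) by blast
  qed
qed

lemma lift_chain_endpoints_agree_along_path:
  fixes f :: "'a::heine_borel \<Rightarrow> 'b::real_normed_vector" and \<gamma> :: "real \<Rightarrow> 'a"
  assumes J: "\<And>x y. f (J x y) = y \<and> c * dist (J x y) x \<le> dist (f x) y" and c: "c > 0"
    and cont: "continuous_on UNIV f" and expanding: "locally_expanding f c"
    and \<gamma>: "continuous_on {0..1} \<gamma>"
  obtains N where "N > 0"
    "lift_chain J (\<gamma> 0) (segment_point (f (\<gamma> 0)) w N) N = lift_chain J (\<gamma> 1) (segment_point (f (\<gamma> 1)) w N) N"
proof -
  have f\<gamma>: "continuous_on {0..1} (f \<circ> \<gamma>)" using continuous_on_compose[OF \<gamma>] cont continuous_on_subset by blast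
  obtain B where B: "\<And>t. t \<in> {0..1} \<Longrightarrow> dist (\<gamma> 0) (\<gamma> t) \<le> B"
    using compact_imp_bounded[OF compact_continuous_image[OF \<gamma> compact_Icc]]
    unfolding bounded_any_center[where a = "\<gamma> 0"] by blast
  obtain M where "\<And>t. t \<in> {0..1} \<Longrightarrow> dist w (f (\<gamma> t)) \<le> M"
    using compact_imp_bounded[OF compact_continuous_image[OF f\<gamma> compact_Icc]]
    unfolding bounded_any_center[where a = w] by fastforce
  then have M: "\<And>t. t \<in> {0..1} \<Longrightarrow> dist (f (\<gamma> t)) w \<le> M" by (simp add: dist_commute)
  define K where "K = cball (\<gamma> 0) (B + M / c)"
  have "compact K" unfolding K_def by simp
  then obtain \<delta> where \<delta>: "\<delta> > 0" "\<And>y z. y \<in> K \<Longrightarrow> dist y z < \<delta> \<Longrightarrow> c * dist y z \<le> dist (f y) (f z)"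
    by (rule locally_expanding_uniformly_near_compact[OF expanding]) (rule that)
  obtain N1 where N1: "\<And>N i. N1 \<le> N \<Longrightarrow> i < N \<Longrightarrow> dist (\<gamma> (real i / real N)) (\<gamma> (real (Suc i) / real N)) < \<delta> / 4"
    using continuous_on_unit_interval_grid[OF \<gamma>] \<delta>(1) by (metis zero_less_divide_iff zero_less_numeral)
  obtain N2 where N2: "\<And>N i. N2 \<le> N \<Longrightarrow> i < N \<Longrightarrow> dist (f (\<gamma> (real i / real N))) (f (\<gamma> (real (Suc i) / real N))) < c * \<delta> / 4"
    using continuous_on_unit_interval_grid[OF f\<gamma>] c \<delta>(1) by (metis comp_apply divide_pos_pos mult_pos_pos zero_less_numeral)
  obtain N3 :: nat where N3: "8 * M / (c * \<delta>) < real N3" using reals_Archimedean2 by blast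
  define N where "N = Suc (max N1 (max N2 N3))"
  define R where "R i = lift_chain J (\<gamma> (real i / real N)) (segment_point (f (\<gamma> (real i / real N))) w N) N" for i
  have N: "N > 0" "N1 \<le> N" "N2 \<le> N" "8 * M / (c * \<delta>) < real N" using N3 unfolding N_def by auto
  have grid: "real i / real N \<in> {0..1}" if "i \<le> N" for i using that N(1) by (simp add: divide_le_eq_1)
  have short: "dist (f (\<gamma> (real j / real N))) w \<le> real N * c * \<delta> / 8" if "j \<le> N" for j
    using M[OF grid[OF that]] N(4) c \<delta>(1) by (simp add: field_simps)
  have meet: "R i = R (Suc i)" if "i < N" for i
    unfolding R_def
  proof (rule lift_chain_segments_meet[OF J c N(1) \<delta>(2)])
    let ?x = "\<gamma> (real i / real N)"
    have "dist (\<gamma> 0) ?x \<le> B" "dist (f ?x) w / c \<le> M / c"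
      using B[OF grid] M[OF grid] that c by (auto simp: divide_right_mono)
    then show "cball ?x (dist (f ?x) w / c) \<subseteq> K"
      unfolding K_def using dist_triangle[of "\<gamma> 0" _ ?x] by (auto simp: subset_iff) (smt (verit))
    show "dist ?x (\<gamma> (real (Suc i) / real N)) < \<delta> / 4" by (rule N1[OF N(2) that])
    show "dist (f ?x) (f (\<gamma> (real (Suc i) / real N))) < c * \<delta> / 4" by (rule N2[OF N(3) that])
    show "dist (f ?x) w \<le> real N * c * \<delta> / 8"
      and "dist (f (\<gamma> (real (Suc i) / real N))) w \<le> real N * c * \<delta> / 8"
      using short[of i] short[of "Suc i"] that by simp_all
  qed
  have "R 0 = R i" if "i \<le> N" for i
    using that by (induction i) (simp_all add: meet[symmetric])
  then have "R 0 = R N" by simp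
  with N(1) show ?thesis unfolding R_def by (intro that) simp_all
qed

lemma linearly_surjective_locally_expanding_imp_inj:
  fixes f :: "'a::{real_normed_vector,heine_borel} \<Rightarrow> 'b::real_normed_vector"
  assumes cont: "continuous_on UNIV f" and c: "c > 0"
    and surj: "linearly_surjective f c" and expanding: "locally_expanding f c"
  shows "inj f"
proof (rule injI)
  fix a b assume ab: "f a = f b"
  obtain J where J: "\<And>x y. f (J x y) = y \<and> c * dist (J x y) x \<le> dist (f x) y"
    using surj unfolding linearly_surjective_def by metis
  have stays: "lift_chain J x (segment_point (f x) (f a) N) N = x" if "f x = f a" "N > 0" for x N
    using lift_chain_segment(3)[OF J less_imp_le[OF c] that(2), of x "f a" N] that(1) c
    by (simp add: mult_le_0_iff)
  have "continuous_on {0..1} (\<lambda>t. a + t *\<^sub>R (b - a))" by (intro continuous_intros)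
  then obtain N where "N > 0" "lift_chain J a (segment_point (f a) (f a) N) N
      = lift_chain J b (segment_point (f b) (f a) N) N"
    by (rule lift_chain_endpoints_agree_along_path[OF J c cont expanding]) simp
  then show "a = b" using stays[of a] stays[of b] ab by simp
qed

lemma inj_linearly_surjective_inverse:
  assumes "inj f" and surj: "linearly_surjective f c"
  shows "bij f" and "c * dist (inv f y) (inv f y') \<le> dist y y'"
proof -
  obtain z where z: "f z = y'" "c * dist z (inv f y) \<le> dist (f (inv f y)) y'"
    using surj unfolding linearly_surjective_def by blast
  have "surj f" using surj unfolding linearly_surjective_def by (metis surjI)
  then show "bij f" using assms(1) by (simp add: bij_def)
  show "c * dist (inv f y) (inv f y') \<le> dist y y'"
    using z inv_f_f[OF assms(1)] surj_f_inv_f[OF \<open>surj f\<close>] by (metis dist_commute)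
qed

lemma strongly_regular_estimators_global_inverse:
  fixes f :: "'a::{real_normed_vector,heine_borel} \<Rightarrow> 'b::real_normed_vector"
    and h :: "'a \<Rightarrow> 'a \<Rightarrow> 'b"
  assumes cont: "continuous_on UNIV f" and \<mu>: "\<mu> \<ge> 0"
    and est: "\<And>x. strict_estimator \<mu> (h x) f x" and sr: "\<And>x. strongly_regular (h x) x"
    and c: "c > 0" and lop: "\<And>x. ereal (c + \<mu>) < lop (h x) x"
  shows "bij f" and "c * dist (inv f y) (inv f y') \<le> dist y y'"
proof -
  have local: "(\<forall>w. f x \<noteq> w \<longrightarrow> (\<exists>z. dist (f z) w + c * dist z x < dist (f x) w)) \<and>
      (\<exists>\<rho>>0. \<forall>y\<in>ball x \<rho>. \<forall>z\<in>ball x \<rho>. c * dist y z \<le> dist (f y) (f z))" for x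
  proof -
    obtain \<alpha> where lo: "linearly_open_with (h x) x \<alpha>" and \<alpha>: "c + \<mu> < \<alpha>"
      using linearly_open_with_above[OF lop] c \<mu> by (metis add_nonneg_nonneg less_imp_le)
    \<comment> \<open>Leave room between \<open>\<mu>\<close> and \<open>\<alpha> - c\<close> for a Lipschitz constant of \<open>f - h x\<close>.\<close>
    define l where "l = (\<mu> + \<alpha> - c) / 2"
    have "\<mu> < l" using \<alpha> unfolding l_def by simp
    then obtain U where U: "open U" "x \<in> U" "l-lipschitz_on U (\<lambda>z. f z - h x z)"
      by (rule strict_estimator_lipschitz_near[OF est])
    have hx: "h x x = f x" using est unfolding strict_estimator_def by simp
    have "c + l < \<alpha>" using \<alpha> unfolding l_def by (simp add: field_simps)
    then show ?thesis
      using estimator_descent[OF hx U lo c] estimator_local_expansion[OF _ U lo sr[of x]] cont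
      by (metis UNIV_I continuous_on_eq_continuous_at less_imp_le open_UNIV)
  qed
  have "linearly_surjective f c" using descent_imp_linearly_surjective[OF cont c] local by blast
  moreover have "inj f"
    using linearly_surjective_locally_expanding_imp_inj[OF cont c] calculation local
    unfolding locally_expanding_def by blast
  ultimately show "bij f" and "c * dist (inv f y) (inv f y') \<le> dist y y'"
    using inj_linearly_surjective_inverse by blast+
qed

lemma lipschitz_on_if_all_smaller_rates:
  fixes g :: "'a::metric_space \<Rightarrow> 'b::metric_space"
  assumes C: "C > 0" and rates: "\<And>c y y'. 0 < c \<Longrightarrow> c < C \<Longrightarrow> c * dist (g y) (g y') \<le> dist y y'"
  shows "(1 / C)-lipschitz_on UNIV g"
proof (rule lipschitz_onI)
  fix y y'
  have "C * dist (g y) (g y') \<le> dist y y'"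
  proof (rule field_le_mult_one_interval)
    fix z :: real assume "0 < z" "z < 1"
    then show "z * (C * dist (g y) (g y')) \<le> dist y y'"
      using C rates[of "z * C" y y'] by (simp add: mult.assoc)
  qed
  then show "dist (g y) (g y') \<le> 1 / C * dist y y'" using C by (simp add: field_simps mult.commute)
qed (use C in simp)

lemma nonpos_if_all_multiples_bounded:
  fixes a b :: real
  assumes "\<And>c. 0 < c \<Longrightarrow> c * a \<le> b"
  shows "a \<le> 0"
proof (rule ccontr)
  assume "\<not> a \<le> 0"
  then have "(\<bar>b\<bar> + 1) / a * a = \<bar>b\<bar> + 1" by simp
  moreover have "(\<bar>b\<bar> + 1) / a * a \<le> b" using \<open>\<not> a \<le> 0\<close> by (intro assms) simp
  ultimately show False by linarith
qed

lemma bij_inv_not_all_rates: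
  fixes f :: "'a::metric_space \<Rightarrow> 'b::{metric_space,zero_neq_one}"
  assumes "bij f" and rates: "\<And>c. 0 < c \<Longrightarrow> c * dist (inv f 0) (inv f 1) \<le> dist 0 (1::'b)"
  shows False
proof -
  have "dist (inv f 0) (inv f 1) \<le> 0" using rates by (rule nonpos_if_all_multiples_bounded)
  moreover have "inj (inv f)" using assms(1) bij_imp_bij_inv bij_is_inj by blast
  ultimately show False by (metis dist_le_zero_iff injD zero_neq_one)
qed

theorem mainTheorem5:
  fixes f :: "real ^ 'n \<Rightarrow> real ^ 'n"
    and h :: "real ^ 'n \<Rightarrow> real ^ 'n \<Rightarrow> real ^ 'n"
    and \<mu> :: real
  assumes "continuous_on UNIV f"
    and "\<mu> \<ge> 0"
    and "\<And>x. strict_estimator \<mu> (h x) f x"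
    and "\<And>x. strongly_regular (h x) x"
    and "(INF x. lop (h x) x) > ereal \<mu>"
  shows "bij f \<and>
    (1 / (real_of_ereal (INF x. lop (h x) x) - \<mu>))-lipschitz_on UNIV (inv f)"
proof -
  define \<sigma> where "\<sigma> = (INF x. lop (h x) x)"
  have le_lop: "\<sigma> \<le> lop (h x) x" for x unfolding \<sigma>_def by (rule INF_lower) simp
  have rate: "bij f \<and> c * dist (inv f y) (inv f y') \<le> dist y y'"
    if "0 < c" "ereal (c + \<mu>) < \<sigma>" for c y y'
    using strongly_regular_estimators_global_inverse[OF assms(1-4) that(1)
        order.strict_trans2[OF that(2) le_lop]] by (intro conjI)
  have "\<sigma> \<noteq> \<infinity>"
  proof
    assume "\<sigma> = \<infinity>"
    then have "bij f" using rate[of 1] by simp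
    moreover have "c * dist (inv f 0) (inv f 1) \<le> dist 0 (1::real ^ 'n)" if "0 < c" for c
      using rate[OF that] \<open>\<sigma> = \<infinity>\<close> by (simp del: dist_0_norm)
    ultimately show False by (rule bij_inv_not_all_rates)
  qed
  moreover have "\<sigma> > ereal \<mu>" using assms(5) unfolding \<sigma>_def .
  ultimately obtain S where S: "\<sigma> = ereal S" "\<mu> < S" by (cases \<sigma>) auto
  have "(1 / (S - \<mu>))-lipschitz_on UNIV (inv f)"
    using S rate by (intro lipschitz_on_if_all_smaller_rates) (simp_all add: field_simps)
  moreover have "bij f" using rate[of "(S - \<mu>) / 2"] S by (simp add: field_simps)
  ultimately show ?thesis using S(1) unfolding \<sigma>_def by simp
qed

end
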